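(* For all integers $n\ge0$ and $d\ge1$ there is an $(n+1)\times(n+1)$ real matrix $M$, with rows and columns indexed by $\{0,1,\dots,n\}$, such that $\gamma_2(M)\le d$ and $M_{st}=s-t$ for all $s,t\in\{0,\dots,n\}$ with $|s-t|\le d$.
   Context: For a real matrix $A$, $\gamma_2(A)=\min\{c(X)c(Y): X^{\mathsf T}Y=A\}$, where $c(X)$ denotes the maximum Euclidean norm of a column of $X$. *)

theory Defs
  imports "HOL-Analysis.Analysis"
begin

text \<open>Matrices are represented as functions nat => nat => real together with
explicit dimensions. A k x m matrix X has entries X l i for l < k, i < m.\<close>

text \<open>Maximum Euclidean norm of a column of a k x m matrix X (m >= 1 assumed where used).\<close>
definition colnorm_max :: "nat \<Rightarrow> nat \<Rightarrow> (nat \<Rightarrow> nat \<Rightarrow> real) \<Rightarrow> real" where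
  "colnorm_max k m X = Max ((\<lambda>i. sqrt (\<Sum>l<k. (X l i)\<^sup>2)) ` {..<m})"

definition gamma2 :: "nat \<Rightarrow> nat \<Rightarrow> (nat \<Rightarrow> nat \<Rightarrow> real) \<Rightarrow> real" where
  "gamma2 m n A = Inf {colnorm_max k m X * colnorm_max k n Y | k X Y.
      \<forall>i<m. \<forall>j<n. A i j = (\<Sum>l<k. X l i * Y l j)}"

end

theory Submission
  imports Defs
begin

text \<open>Let \<open>q\<close> be the \<open>\<plusminus>1\<close> square wave of period \<open>4d\<close> (value \<open>1\<close> on the first half of each
period). Its autocorrelation over one period at lag \<open>k \<le> 2d\<close> is the triangle wave \<open>4d - 4k\<close>,
independently of the starting point. Hence with \<open>X l s = q (l + s) / 2\<close> and
\<open>Y l t = q (l + t + d) / 2\<close> (\<open>l < 4d\<close>) the matrix \<open>X\<^sup>T Y\<close> has entry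
\<open>(4d - 4(t + d - s)) / 4 = s - t\<close> whenever \<open>\<bar>s - t\<bar> \<le> d\<close>, while every column of \<open>X\<close> and \<open>Y\<close>
has norm \<open>\<surd>d\<close>.\<close>

lemma sum_shift_periodic:
  fixes G :: "nat \<Rightarrow> 'a::ab_group_add"
  assumes periodic: "\<And>j. G (j + m) = G j"
  shows "(\<Sum>l<m. G (l + a)) = (\<Sum>l<m. G l)"
proof (induction a)
  case 0
  then show ?case by simp
next
  case (Suc a)
  have "(\<Sum>l<m. G (l + a)) + G (m + a) = G a + (\<Sum>l<m. G (Suc l + a))"
    using sum.lessThan_Suc_shift[of "\<lambda>l. G (l + a)" m] by (simp add: add.commute)
  moreover have "G (m + a) = G a"
    using periodic[of a] by (simp add: add.commute)
  ultimately show ?case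
    using Suc by simp
qed

definition square_wave :: "nat \<Rightarrow> nat \<Rightarrow> real" where
  "square_wave h j = (if j mod (2 * h) < h then 1 else -1)"

lemma square_wave_periodic: "square_wave h (j + 2 * h) = square_wave h j"
  by (simp add: square_wave_def)

lemma square_wave_squared: "(square_wave h j)\<^sup>2 = 1"
  by (simp add: square_wave_def)

lemma square_wave_mult_shift:
  assumes "l < 2 * h" "k \<le> h"
  shows "square_wave h l * square_wave h (l + k) =
           (if l \<in> {h - k..<h} \<union> {2 * h - k..<2 * h} then -1 else 1)"
proof -
  have "(l + k) mod (2 * h) = (if l + k < 2 * h then l + k else l + k - 2 * h)"
    using assms by (auto simp: mod_if)
  then show ?thesis
    using assms by (auto simp: square_wave_def)
qed

lemma square_wave_autocorrelation:
  assumes "k \<le> h"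
  shows "(\<Sum>l<2 * h. square_wave h (l + a) * square_wave h (l + a + k)) = 2 * real h - 4 * real k"
proof -
  let ?flips = "{h - k..<h} \<union> {2 * h - k..<2 * h}"
  have card_flips: "card ?flips = 2 * k"
    using assms by (subst card_Un_disjoint) auto
  have "(\<Sum>l<2 * h. square_wave h (l + a) * square_wave h (l + a + k))
          = (\<Sum>l<2 * h. square_wave h l * square_wave h (l + k))"
  proof -
    have "square_wave h (j + 2 * h) * square_wave h (j + 2 * h + k) =
            square_wave h j * square_wave h (j + k)" for j
      using square_wave_periodic[of h "j + k"] by (simp add: square_wave_periodic add_ac)
    from sum_shift_periodic[of "\<lambda>j. square_wave h j * square_wave h (j + k)", OF this]
    show ?thesis
      by (simp add: add.assoc)
  qed
  also have "\<dots> = (\<Sum>l<2 * h. 1 - 2 * of_bool (l \<in> ?flips))"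
    using assms by (intro sum.cong) (auto simp: square_wave_mult_shift)
  also have "\<dots> = 2 * real h - 2 * real (card ?flips)"
  proof -
    have "{..<2 * h} \<inter> {l. l \<in> ?flips} = ?flips"
      by auto
    then show ?thesis
      by (simp add: sum_subtractf flip: sum_distrib_left del: Un_iff)
  qed
  finally show ?thesis
    using card_flips by simp
qed

lemma colnorm_max_nonneg:
  assumes "m > 0"
  shows "colnorm_max k m X \<ge> 0"
proof -
  have "sqrt (\<Sum>l<k. (X l 0)\<^sup>2) \<le> colnorm_max k m X"
    unfolding colnorm_max_def using assms by (intro Max_ge) auto
  then show ?thesis
    by (meson order_trans real_sqrt_ge_zero sum_nonneg zero_le_power2)
qed

lemma colnorm_max_const:
  assumes "m > 0" and "\<And>l i. (X l i)\<^sup>2 = c"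
  shows "colnorm_max k m X = sqrt (real k * c)"
proof -
  have "(\<lambda>i. sqrt (\<Sum>l<k. (X l i)\<^sup>2)) ` {..<m} = {sqrt (real k * c)}"
    using assms by auto
  then show ?thesis
    unfolding colnorm_max_def by simp
qed

lemma gamma2_le_factorization:
  assumes "m > 0" "n > 0"
    and "\<And>i j. i < m \<Longrightarrow> j < n \<Longrightarrow> A i j = (\<Sum>l<k. X l i * Y l j)"
  shows "gamma2 m n A \<le> colnorm_max k m X * colnorm_max k n Y"
  unfolding gamma2_def
proof (rule cInf_lower)
  show "colnorm_max k m X * colnorm_max k n Y \<in> {colnorm_max k m X * colnorm_max k n Y | k X Y.
          \<forall>i<m. \<forall>j<n. A i j = (\<Sum>l<k. X l i * Y l j)}"
    using assms(3) by blast
  show "bdd_below {colnorm_max k m X * colnorm_max k n Y | k X Y.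
          \<forall>i<m. \<forall>j<n. A i j = (\<Sum>l<k. X l i * Y l j)}"
    using assms(1,2) by (intro bdd_belowI[of _ 0]) (auto intro!: mult_nonneg_nonneg colnorm_max_nonneg)
qed

theorem lemma4p18:
  fixes n d :: nat
  assumes "d \<ge> 1"
  shows "\<exists>M :: nat \<Rightarrow> nat \<Rightarrow> real.
           gamma2 (n+1) (n+1) M \<le> real d \<and>
           (\<forall>s\<le>n. \<forall>t\<le>n. \<bar>int s - int t\<bar> \<le> int d \<longrightarrow> M s t = real s - real t)"
proof -
  define X where "X = (\<lambda>l s. square_wave (2 * d) (l + s) / 2)"
  define Y where "Y = (\<lambda>l t. square_wave (2 * d) (l + t + d) / 2)"
  define M where "M = (\<lambda>s t. \<Sum>l<4 * d. X l s * Y l t)"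
  have "gamma2 (n + 1) (n + 1) M \<le> colnorm_max (4 * d) (n + 1) X * colnorm_max (4 * d) (n + 1) Y"
    by (rule gamma2_le_factorization) (simp_all add: M_def)
  also have "\<dots> = sqrt (real d) * sqrt (real d)"
    by (subst (1 2) colnorm_max_const[where c = "1/4"])
       (simp_all add: X_def Y_def power_divide square_wave_squared)
  finally have "gamma2 (n + 1) (n + 1) M \<le> real d"
    by simp
  moreover have "M s t = real s - real t" if "\<bar>int s - int t\<bar> \<le> int d" for s t
  proof -
    define k where "k = t + d - s"
    have k: "k \<le> 2 * d" "t + d = s + k"
      using that unfolding k_def by auto
    have "M s t =
        (\<Sum>l<2 * (2 * d). square_wave (2 * d) (l + s) * square_wave (2 * d) (l + s + k)) / 4"
      by (simp add: M_def X_def Y_def sum_divide_distrib k(2) add.assoc)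
    also have "\<dots> = (4 * real d - 4 * real k) / 4"
      using square_wave_autocorrelation[OF k(1)] by simp
    finally show ?thesis
      using arg_cong[OF k(2), of real] by simp
  qed
  ultimately show ?thesis
    by blast
qed

end
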